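(* Let $\alpha>0$, let $W$ be a standard Brownian motion on a filtered probability space $(\Omega,\{\mathscr{F}_t\},\mathbb{P})$, and let $X$ solve $dX_t=-\alpha X_t\,dt+dW_t$, $X_0=0$. Let $X^*_t=\sup_{0\le s\le t}|X_s|$. There exists a function $\phi:\mathbb{R}_+\to\mathbb{R}_+$ satisfying $\phi(\delta)\to0$ as $\delta\to0$ such that for any stopping time $\tau$ with respect to $\{\mathscr{F}_t\}$ and any $\delta,\lambda>0$, \[ \mathbb{P}\big(\log^{1/2}(1+\alpha\tau)\ge2\lambda,\ X^*_\tau<\delta\lambda\big)\le\phi(\delta)\,\mathbb{P}\big(\log^{1/2}(1+\alpha\tau)\ge\lambda\big). \] *)

theory Defs
  imports "HOL-Probability.Probability"
begin

definition filtered_prob_space :: "'a measure \<Rightarrow> (real \<Rightarrow> 'a measure) \<Rightarrow> bool" where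
  "filtered_prob_space M F \<longleftrightarrow> prob_space M \<and>
     (\<forall>t. space (F t) = space M \<and> sets (F t) \<subseteq> sets M) \<and>
     (\<forall>s t. 0 \<le> s \<longrightarrow> s \<le> t \<longrightarrow> sets (F s) \<subseteq> sets (F t))"

definition std_brownian_motion ::
    "'a measure \<Rightarrow> (real \<Rightarrow> 'a measure) \<Rightarrow> (real \<Rightarrow> 'a \<Rightarrow> real) \<Rightarrow> bool" where
  "std_brownian_motion M F W \<longleftrightarrow>
     (\<forall>t\<ge>0. W t \<in> borel_measurable (F t)) \<and>
     (AE \<omega> in M. W 0 \<omega> = 0 \<and> continuous_on {0..} (\<lambda>t. W t \<omega>)) \<and>
     (\<forall>s t. 0 \<le> s \<longrightarrow> s < t \<longrightarrow>
        distributed M lborel (\<lambda>\<omega>. W t \<omega> - W s \<omega>)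
          (\<lambda>x. ennreal (normal_density 0 (sqrt (t - s)) x))) \<and>
     (\<forall>s t. 0 \<le> s \<longrightarrow> s \<le> t \<longrightarrow> (\<forall>A\<in>sets (F s). \<forall>B\<in>sets borel.
        measure M (A \<inter> {\<omega>\<in>space M. W t \<omega> - W s \<omega> \<in> B})
          = measure M A * measure M {\<omega>\<in>space M. W t \<omega> - W s \<omega> \<in> B}))"

definition ou_solution ::
    "'a measure \<Rightarrow> (real \<Rightarrow> 'a measure) \<Rightarrow> real \<Rightarrow> (real \<Rightarrow> 'a \<Rightarrow> real)
       \<Rightarrow> (real \<Rightarrow> 'a \<Rightarrow> real) \<Rightarrow> bool" where
  "ou_solution M F \<alpha> W X \<longleftrightarrow>
     (\<forall>t\<ge>0. X t \<in> borel_measurable (F t)) \<and>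
     (AE \<omega> in M. X 0 \<omega> = 0 \<and> continuous_on {0..} (\<lambda>t. X t \<omega>) \<and>
        (\<forall>t\<ge>0. X t \<omega> = - \<alpha> * integral {0..t} (\<lambda>s. X s \<omega>) + W t \<omega>))"

definition is_stopping_time :: "(real \<Rightarrow> 'a measure) \<Rightarrow> ('a \<Rightarrow> ennreal) \<Rightarrow> bool" where
  "is_stopping_time F \<tau> \<longleftrightarrow>
     (\<forall>t\<ge>0. {\<omega>\<in>space (F t). \<tau> \<omega> \<le> ennreal t} \<in> sets (F t))"

definition run_max :: "(real \<Rightarrow> 'a \<Rightarrow> real) \<Rightarrow> ('a \<Rightarrow> ennreal) \<Rightarrow> 'a \<Rightarrow> ereal" where
  "run_max X \<tau> \<omega> = (SUP s\<in>{s. 0 \<le> s \<and> ennreal s \<le> \<tau> \<omega>}. ereal \<bar>X s \<omega>\<bar>)"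

definition sqrt_log_clock :: "real \<Rightarrow> ennreal \<Rightarrow> ereal" where
  "sqrt_log_clock \<alpha> t = (if t = \<top> then \<infinity> else ereal (sqrt (ln (1 + \<alpha> * enn2real t))))"

end

theory Submission
  imports Defs
begin

text \<open>Let \<open>T\<^sub>1 < T\<^sub>2\<close> be the times at which \<open>log\<^sup>1\<^sup>/\<^sup>2(1 + \<alpha>t)\<close> reaches \<open>\<lambda>\<close> and \<open>2\<lambda>\<close>, and cut
  \<open>[T\<^sub>1, T\<^sub>2]\<close> into \<open>N\<close> blocks of length \<open>h\<close>. Integrating \<open>dX = -\<alpha>X dt + dW\<close> over a block
  shows that \<open>|X| < \<delta>\<lambda>\<close> on \<open>[0, T\<^sub>2]\<close> forces every Brownian increment over a block to be
  smaller than \<open>c = \<delta>\<lambda>(2 + \<alpha>h)\<close>. On the event \<open>{\<tau> > T\<^sub>1}\<close>, which is known at time \<open>T\<^sub>1\<close>, these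
  increments are independent \<open>N(0, h)\<close> variables, so the probability in question is at most
  \<open>P(\<tau> \<ge> T\<^sub>1) q\<^sup>N\<close>, where \<open>q\<close> bounds \<open>P(|N(0, h)| < c)\<close>. Choosing \<open>N \<approx> e\<^sup>4\<^sup>\<lambda>\<^sup>2\<close> makes \<open>q\<^sup>N\<close>
  small uniformly in \<open>\<lambda>\<close>: either \<open>c/\<surd>h\<close> is already small, or the Gaussian tail gives
  \<open>q \<le> 1 - e\<^sup>-\<^sup>2\<^sup>\<lambda>\<^sup>2/3\<close>, whose \<open>N\<close>-th power is \<open>O(\<lambda>\<^sup>-\<^sup>2)\<close> and hence \<open>O(\<delta>\<alpha>)\<close> in that regime.\<close>

subsection \<open>Small balls of a centred Gaussian\<close>

definition small_ball_bound :: "real \<Rightarrow> real" where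
  "small_ball_bound x = min x (1 - exp (- (x + 1)\<^sup>2 / 2) / 3)"

lemma small_ball_bound_nonneg:
  assumes "x \<ge> 0" shows "small_ball_bound x \<ge> 0"
proof -
  have "exp (- (x + 1)\<^sup>2 / 2) \<le> 1" by simp
  then show ?thesis using assms unfolding small_ball_bound_def by linarith
qed

lemma small_ball_bound_le_one: "small_ball_bound x \<le> 1"
proof -
  have "0 < exp (- (x + 1)\<^sup>2 / 2)" by simp
  then show ?thesis unfolding small_ball_bound_def by linarith
qed

lemma normal_density_le_peak:
  assumes "\<sigma> > 0" shows "normal_density 0 \<sigma> x \<le> 1 / (\<sigma> * sqrt (2 * pi))"
proof -
  have "sqrt (2 * pi * \<sigma>\<^sup>2) = \<sigma> * sqrt (2 * pi)"
    using assms by (simp add: real_sqrt_mult mult.commute)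
  then show ?thesis
    using assms unfolding normal_density_def by (simp add: divide_right_mono)
qed

lemma normal_density_ge_on_interval:
  assumes "\<sigma> > 0" "c \<ge> 0" "x \<in> {c..c + \<sigma>}"
  shows "exp (- (c + \<sigma>)\<^sup>2 / (2 * \<sigma>\<^sup>2)) / (\<sigma> * sqrt (2 * pi)) \<le> normal_density 0 \<sigma> x"
proof -
  have "x\<^sup>2 \<le> (c + \<sigma>)\<^sup>2" using assms by (intro power_mono) auto
  then have "exp (- (c + \<sigma>)\<^sup>2 / (2 * \<sigma>\<^sup>2)) \<le> exp (- x\<^sup>2 / (2 * \<sigma>\<^sup>2))"
    using assms by (simp add: divide_right_mono)
  moreover have "sqrt (2 * pi * \<sigma>\<^sup>2) = \<sigma> * sqrt (2 * pi)"
    using assms by (simp add: real_sqrt_mult mult.commute)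
  ultimately show ?thesis
    using assms unfolding normal_density_def by (simp add: divide_right_mono)
qed

lemma centered_normal_prob_abs_less_le:
  assumes "prob_space M" and D: "distributed M lborel D (\<lambda>x. ennreal (normal_density 0 \<sigma> x))"
    and "\<sigma> > 0" "c > 0"
  shows "measure M {\<omega>\<in>space M. \<bar>D \<omega>\<bar> < c} \<le> c / \<sigma>"
proof -
  have "{\<omega>\<in>space M. \<bar>D \<omega>\<bar> < c} = D -` {-c<..<c} \<inter> space M" by auto
  moreover have "emeasure M (D -` {-c<..<c} \<inter> space M)
      = (\<integral>\<^sup>+x. ennreal (normal_density 0 \<sigma> x) * indicator {-c<..<c} x \<partial>lborel)"
    by (rule distributed_emeasure[OF D]) simp
  moreover have "\<dots> \<le> (\<integral>\<^sup>+x. ennreal (1 / (\<sigma> * sqrt (2 * pi))) * indicator {-c<..<c} x \<partial>lborel)"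
    using normal_density_le_peak[OF \<open>\<sigma> > 0\<close>]
    by (intro nn_integral_mono) (auto split: split_indicator intro: ennreal_leI)
  moreover have "\<dots> = ennreal (2 * c / (\<sigma> * sqrt (2 * pi)))"
    using assms by (subst nn_integral_cmult_indicator)
      (auto simp: emeasure_lborel_Ioo ennreal_mult[symmetric])
  ultimately have "measure M {\<omega>\<in>space M. \<bar>D \<omega>\<bar> < c} \<le> 2 * c / (\<sigma> * sqrt (2 * pi))"
    unfolding measure_def using assms by (intro enn2real_leI) auto
  also have "\<dots> \<le> c / \<sigma>"
  proof -
    have "2 \<le> sqrt (2 * pi)" using pi_gt3 by (simp add: real_le_rsqrt)
    then show ?thesis using assms by (simp add: field_simps)
  qed
  finally show ?thesis .
qed

text \<open>The mass of \<open>[c, c + \<sigma>]\<close> is missing from \<open>{|D| < c}\<close>.\<close>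

lemma centered_normal_prob_abs_less_le_tail:
  assumes "prob_space M" and D: "distributed M lborel D (\<lambda>x. ennreal (normal_density 0 \<sigma> x))"
    and "\<sigma> > 0" "c > 0"
  shows "measure M {\<omega>\<in>space M. \<bar>D \<omega>\<bar> < c} \<le> 1 - exp (- (c / \<sigma> + 1)\<^sup>2 / 2) / 3"
proof -
  interpret prob_space M by fact
  have Dm: "D \<in> borel_measurable M" using distributed_measurable[OF D] by simp
  define m where "m = exp (- (c + \<sigma>)\<^sup>2 / (2 * \<sigma>\<^sup>2)) / (\<sigma> * sqrt (2 * pi))"
  have "m \<ge> 0" unfolding m_def using assms by simp
  have "ennreal (m * \<sigma>) = (\<integral>\<^sup>+x. ennreal m * indicator {c..c + \<sigma>} x \<partial>lborel)"
    using assms \<open>m \<ge> 0\<close> by (subst nn_integral_cmult_indicator) (auto simp: ennreal_mult)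
  also have "\<dots> \<le> (\<integral>\<^sup>+x. ennreal (normal_density 0 \<sigma> x) * indicator {c..c + \<sigma>} x \<partial>lborel)"
    using normal_density_ge_on_interval[of \<sigma> c] assms unfolding m_def
    by (intro nn_integral_mono) (auto split: split_indicator intro: ennreal_leI)
  also have "\<dots> = emeasure M (D -` {c..c + \<sigma>} \<inter> space M)"
    by (rule distributed_emeasure[OF D, symmetric]) simp
  finally have "m * \<sigma> \<le> measure M (D -` {c..c + \<sigma>} \<inter> space M)"
    using \<open>m \<ge> 0\<close> assms by (simp add: emeasure_eq_measure)
  moreover have "m * \<sigma> = exp (- (c / \<sigma> + 1)\<^sup>2 / 2) / sqrt (2 * pi)"
  proof -
    have "(c + \<sigma>)\<^sup>2 / (2 * \<sigma>\<^sup>2) = (c / \<sigma> + 1)\<^sup>2 / 2"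
      using assms by (simp add: field_simps power2_eq_square)
    then show ?thesis unfolding m_def using assms by simp
  qed
  moreover have "exp (- (c / \<sigma> + 1)\<^sup>2 / 2) / 3 \<le> exp (- (c / \<sigma> + 1)\<^sup>2 / 2) / sqrt (2 * pi)"
  proof -
    have "sqrt (2 * pi) \<le> 3" using pi_less_4 by (intro real_le_lsqrt) auto
    then show ?thesis by (intro divide_left_mono) auto
  qed
  moreover have "measure M {\<omega>\<in>space M. \<bar>D \<omega>\<bar> < c} + measure M (D -` {c..c + \<sigma>} \<inter> space M)
      = measure M ({\<omega>\<in>space M. \<bar>D \<omega>\<bar> < c} \<union> (D -` {c..c + \<sigma>} \<inter> space M))"
    using Dm by (intro measure_Union[symmetric]) auto
  moreover have "measure M ({\<omega>\<in>space M. \<bar>D \<omega>\<bar> < c} \<union> (D -` {c..c + \<sigma>} \<inter> space M)) \<le> 1"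
    by (rule prob_le_1)
  ultimately show ?thesis by linarith
qed

lemma brownian_increment_prob_abs_less_le:
  assumes "prob_space M" "std_brownian_motion M F W" "s \<ge> 0" "h > 0" "c > 0"
  shows "measure M {\<omega>\<in>space M. \<bar>W (s + h) \<omega> - W s \<omega>\<bar> < c} \<le> small_ball_bound (c / sqrt h)"
proof -
  have incr: "\<forall>s\<ge>0. \<forall>t>s. distributed M lborel (\<lambda>\<omega>. W t \<omega> - W s \<omega>)
      (\<lambda>x. ennreal (normal_density 0 (sqrt (t - s)) x))"
    using assms(2) unfolding std_brownian_motion_def by blast
  then have "distributed M lborel (\<lambda>\<omega>. W (s + h) \<omega> - W s \<omega>)
      (\<lambda>x. ennreal (normal_density 0 (sqrt h) x))"
    using incr[rule_format, of s "s + h"] assms by simp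
  from centered_normal_prob_abs_less_le[OF _ this] centered_normal_prob_abs_less_le_tail[OF _ this]
  show ?thesis using assms unfolding small_ball_bound_def by simp
qed

subsection \<open>Independent Brownian increments after a fixed time\<close>

lemma brownian_small_increments_prob_le:
  assumes fp: "filtered_prob_space M F" and bm: "std_brownian_motion M F W"
    and "t\<^sub>0 \<ge> 0" "h > 0" and A: "A \<in> sets (F t\<^sub>0)"
    and q: "\<And>s. s \<ge> 0 \<Longrightarrow> measure M {\<omega>\<in>space M. \<bar>W (s + h) \<omega> - W s \<omega>\<bar> < c} \<le> q"
  defines "E n \<equiv> {\<omega>\<in>space M. \<omega> \<in> A \<and>
      (\<forall>k<n. \<bar>W (t\<^sub>0 + real (Suc k) * h) \<omega> - W (t\<^sub>0 + real k * h) \<omega>\<bar> < c)}"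
  shows "E N \<in> sets (F (t\<^sub>0 + real N * h)) \<and> measure M (E N) \<le> measure M A * q ^ N"
proof (induction N)
  case 0
  have "space (F t\<^sub>0) = space M" using fp unfolding filtered_prob_space_def by auto
  then have "E 0 = A" using sets.sets_into_space[OF A] unfolding E_def by auto
  then show ?case using A by simp
next
  case (Suc N)
  define s where "s = t\<^sub>0 + real N * h"
  define t where "t = t\<^sub>0 + real (Suc N) * h"
  define I where "I = {\<omega>\<in>space M. W t \<omega> - W s \<omega> \<in> {y. \<bar>y\<bar> < c}}"
  have "t = s + h" "s \<ge> 0" "s \<le> t"
    unfolding s_def t_def using assms by (auto simp: algebra_simps)
  have sp: "space (F u) = space M" and mono: "0 \<le> u \<Longrightarrow> u \<le> v \<Longrightarrow> sets (F u) \<subseteq> sets (F v)"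
    for u v using fp unfolding filtered_prob_space_def by auto
  have W: "W u \<in> borel_measurable (F u)" if "u \<ge> 0" for u
    using bm that unfolding std_brownian_motion_def by simp
  have "W s \<in> borel_measurable (F t)"
    using mono[of s t] \<open>s \<ge> 0\<close> \<open>s \<le> t\<close> sp
    by (intro measurable_from_subalg[OF _ W]) (auto simp: subalgebra_def)
  moreover have "W t \<in> borel_measurable (F t)" using W \<open>s \<ge> 0\<close> \<open>s \<le> t\<close> by simp
  ultimately have "{\<omega>\<in>space (F t). \<bar>W t \<omega> - W s \<omega>\<bar> < c} \<in> sets (F t)" by measurable
  then have "I \<in> sets (F t)" unfolding I_def sp by simp
  have IH: "E N \<in> sets (F s)" "measure M (E N) \<le> measure M A * q ^ N"
    using Suc.IH unfolding s_def by auto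
  have E_Suc: "E (Suc N) = E N \<inter> I"
    unfolding E_def I_def s_def t_def by (auto simp: less_Suc_eq)
  have "q \<ge> 0" using q[of 0] measure_nonneg order_trans by blast
  have indep: "\<forall>s t. 0 \<le> s \<longrightarrow> s \<le> t \<longrightarrow> (\<forall>A\<in>sets (F s). \<forall>B\<in>sets borel.
      measure M (A \<inter> {\<omega>\<in>space M. W t \<omega> - W s \<omega> \<in> B})
        = measure M A * measure M {\<omega>\<in>space M. W t \<omega> - W s \<omega> \<in> B})"
    using bm unfolding std_brownian_motion_def by blast
  have "measure M (E N \<inter> I) = measure M (E N) * measure M I"
    unfolding I_def by (rule indep[rule_format, OF \<open>s \<ge> 0\<close> \<open>s \<le> t\<close> IH(1)]) simp
  also have "\<dots> \<le> measure M A * q ^ N * q"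
    using IH(2) q[OF \<open>s \<ge> 0\<close>] \<open>q \<ge> 0\<close> \<open>t = s + h\<close> unfolding I_def
    by (intro mult_mono) auto
  finally have "measure M (E (Suc N)) \<le> measure M A * q ^ Suc N"
    unfolding E_Suc by (simp add: mult_ac)
  moreover have "E (Suc N) \<in> sets (F t)"
    using IH(1) mono[OF \<open>s \<ge> 0\<close> \<open>s \<le> t\<close>] \<open>I \<in> sets (F t)\<close> unfolding E_Suc by auto
  ultimately show ?case unfolding t_def by simp
qed

subsection \<open>Paths of the Ornstein--Uhlenbeck equation\<close>

lemma ou_path_increment_bound:
  fixes f w :: "real \<Rightarrow> real"
  assumes cont: "continuous_on {0..} f" and eq: "\<forall>t\<ge>0. f t = - \<alpha> * integral {0..t} f + w t"
    and bnd: "\<And>r. 0 \<le> r \<Longrightarrow> r \<le> T \<Longrightarrow> \<bar>f r\<bar> < b"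
    and s: "0 \<le> s" "s + h \<le> T" "h > 0" and "\<alpha> > 0"
  shows "\<bar>w (s + h) - w s\<bar> < b * (2 + \<alpha> * h)"
proof -
  have "f integrable_on {0..s + h}"
    by (rule integrable_continuous_interval) (rule continuous_on_subset[OF cont], auto)
  then have "integral {0..s} f + integral {s..s + h} f = integral {0..s + h} f"
    using s by (intro Henstock_Kurzweil_Integration.integral_combine) auto
  then have "\<alpha> * integral {0..s + h} f = \<alpha> * integral {0..s} f + \<alpha> * integral {s..s + h} f"
    by (simp add: distrib_left[symmetric])
  moreover have "f (s + h) = - \<alpha> * integral {0..s + h} f + w (s + h)"
    and "f s = - \<alpha> * integral {0..s} f + w s" using eq s by auto
  ultimately have incr: "w (s + h) - w s = f (s + h) - f s + \<alpha> * integral {s..s + h} f"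
    by linarith
  have "norm (integral {s..s + h} f) \<le> b * (s + h - s)"
  proof (rule integral_bound)
    show "continuous_on {s..s + h} f" by (rule continuous_on_subset[OF cont]) (use s in auto)
    show "norm (f t) \<le> b" if "t \<in> {s..s + h}" for t using bnd s that by (simp add: less_imp_le)
  qed (use s in auto)
  then have "\<bar>\<alpha> * integral {s..s + h} f\<bar> \<le> \<alpha> * (b * h)"
    using \<open>\<alpha> > 0\<close> by (simp add: abs_mult)
  moreover have "\<bar>f (s + h)\<bar> < b" "\<bar>f s\<bar> < b" using bnd s by auto
  moreover have "b * (2 + \<alpha> * h) = b + b + \<alpha> * (b * h)" by (simp add: algebra_simps)
  ultimately show ?thesis unfolding incr by linarith
qed

lemma ou_path_block_increment_bound:
  fixes f w :: "real \<Rightarrow> real"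
  assumes "continuous_on {0..} f" "\<forall>t\<ge>0. f t = - \<alpha> * integral {0..t} f + w t"
    and "\<And>r. 0 \<le> r \<Longrightarrow> r \<le> t\<^sub>0 + real N * h \<Longrightarrow> \<bar>f r\<bar> < b"
    and "t\<^sub>0 \<ge> 0" "h > 0" "\<alpha> > 0" "k < N"
  shows "\<bar>w (t\<^sub>0 + real (Suc k) * h) - w (t\<^sub>0 + real k * h)\<bar> < b * (2 + \<alpha> * h)"
proof -
  have "t\<^sub>0 + real k * h + h \<le> t\<^sub>0 + real N * h"
    using assms mult_right_mono[of "real (Suc k)" "real N" h] by (simp add: algebra_simps)
  then have "\<bar>w (t\<^sub>0 + real k * h + h) - w (t\<^sub>0 + real k * h)\<bar> < b * (2 + \<alpha> * h)"
    using assms by (intro ou_path_increment_bound[where T = "t\<^sub>0 + real N * h"]) auto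
  then show ?thesis by (simp add: algebra_simps)
qed

lemma abs_less_of_run_max_less:
  assumes "run_max X \<tau> \<omega> < ereal b" "0 \<le> r" "ennreal r \<le> \<tau> \<omega>"
  shows "\<bar>X r \<omega>\<bar> < b"
proof -
  have "ereal \<bar>X r \<omega>\<bar> \<le> run_max X \<tau> \<omega>"
    unfolding run_max_def using assms by (intro SUP_upper) auto
  then have "ereal \<bar>X r \<omega>\<bar> < ereal b" using assms(1) by (rule order_le_less_trans)
  then show ?thesis by simp
qed

lemma sqrt_log_clock_ge_iff:
  assumes "\<alpha> > 0" "l > 0"
  shows "sqrt_log_clock \<alpha> t \<ge> ereal l \<longleftrightarrow> ennreal ((exp (l\<^sup>2) - 1) / \<alpha>) \<le> t"
proof (cases "t = \<top>")
  case True then show ?thesis by (simp add: sqrt_log_clock_def)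
next
  case False
  define r where "r = enn2real t"
  have "r \<ge> 0" and t: "t = ennreal r" unfolding r_def using False by (auto simp: less_top)
  have "sqrt_log_clock \<alpha> t \<ge> ereal l \<longleftrightarrow> l \<le> sqrt (ln (1 + \<alpha> * r))"
    using False unfolding sqrt_log_clock_def r_def by simp
  also have "\<dots> \<longleftrightarrow> l\<^sup>2 \<le> ln (1 + \<alpha> * r)"
  proof
    assume "l \<le> sqrt (ln (1 + \<alpha> * r))"
    then have "l\<^sup>2 \<le> (sqrt (ln (1 + \<alpha> * r)))\<^sup>2" using assms by (intro power_mono) auto
    then show "l\<^sup>2 \<le> ln (1 + \<alpha> * r)" using assms \<open>r \<ge> 0\<close> by simp
  qed (rule real_le_rsqrt)
  also have "\<dots> \<longleftrightarrow> exp (l\<^sup>2) \<le> 1 + \<alpha> * r"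
    using assms \<open>r \<ge> 0\<close> by (intro ln_ge_iff) (simp add: add_pos_nonneg)
  also have "\<dots> \<longleftrightarrow> (exp (l\<^sup>2) - 1) / \<alpha> \<le> r"
    using assms by (simp add: divide_le_eq algebra_simps)
  finally show ?thesis unfolding t using \<open>r \<ge> 0\<close> by simp
qed

lemma stopping_time_borel_measurable:
  assumes "filtered_prob_space M F" "is_stopping_time F \<tau>"
  shows "\<tau> \<in> borel_measurable M"
proof (rule borel_measurableI_le)
  fix y :: ennreal
  show "{\<omega>\<in>space M. \<tau> \<omega> \<le> y} \<in> sets M"
  proof (cases "y = \<top>")
    case False
    define t where "t = enn2real y"
    have y: "y = ennreal t" using False unfolding t_def by (simp add: less_top)
    have "{\<omega>\<in>space (F t). \<tau> \<omega> \<le> ennreal t} \<in> sets (F t)"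
      using assms(2) unfolding is_stopping_time_def t_def by simp
    moreover have "space (F t) = space M" "sets (F t) \<subseteq> sets M"
      using assms(1) unfolding filtered_prob_space_def by auto
    ultimately show ?thesis unfolding y by auto
  qed simp
qed

lemma sqrt_log_clock_prob_mono:
  assumes "\<alpha> > 0" "filtered_prob_space M F" "is_stopping_time F \<tau>" "l > 0" "l \<le> l'"
  shows "measure M {\<omega>\<in>space M. sqrt_log_clock \<alpha> (\<tau> \<omega>) \<ge> ereal l' \<and> P \<omega>}
    \<le> measure M {\<omega>\<in>space M. sqrt_log_clock \<alpha> (\<tau> \<omega>) \<ge> ereal l}"
proof -
  interpret prob_space M using assms(2) unfolding filtered_prob_space_def by simp
  have "{\<omega>\<in>space M. sqrt_log_clock \<alpha> (\<tau> \<omega>) \<ge> ereal l} \<in> sets M"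
    using stopping_time_borel_measurable[OF assms(2,3)] sqrt_log_clock_ge_iff[OF assms(1,4)]
    by simp measurable
  moreover have "ereal l \<le> ereal l'" using assms by simp
  then have "{\<omega>\<in>space M. sqrt_log_clock \<alpha> (\<tau> \<omega>) \<ge> ereal l' \<and> P \<omega>}
      \<subseteq> {\<omega>\<in>space M. sqrt_log_clock \<alpha> (\<tau> \<omega>) \<ge> ereal l}"
    using order_trans[OF \<open>ereal l \<le> ereal l'\<close>] by blast
  ultimately show ?thesis by (rule finite_measure_mono[rotated])
qed

subsection \<open>Choice of the number of blocks\<close>

definition ou_decay_bound :: "real \<Rightarrow> real \<Rightarrow> real" where
  "ou_decay_bound \<alpha> \<delta> = (2 + exp 4) * \<delta> * sqrt \<alpha> + sqrt \<delta> + 96 * \<delta> * \<alpha>"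

lemma ou_decay_bound_tendsto_zero: "(ou_decay_bound \<alpha> \<longlongrightarrow> 0) (at_right 0)"
  unfolding ou_decay_bound_def by (auto intro!: tendsto_eq_intros)

lemma ou_decay_bound_nonneg:
  assumes "\<alpha> \<ge> 0" "\<delta> \<ge> 0" shows "ou_decay_bound \<alpha> \<delta> \<ge> 0"
  using assms unfolding ou_decay_bound_def by simp

lemma one_minus_pow_le_exp:
  fixes q :: real assumes "0 \<le> q" "q \<le> 1" shows "(1 - q) ^ N \<le> exp (- q * real N)"
proof -
  have "(1 - q) ^ N \<le> exp (- q) ^ N"
    using assms exp_ge_add_one_self[of "- q"] by (intro power_mono) auto
  also have "\<dots> = exp (- q * real N)" by (simp add: exp_of_nat_mult[symmetric] mult.commute)
  finally show ?thesis .
qed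

lemma exp_neg_le_inverse:
  fixes z :: real assumes "z > 0" shows "exp (- z) \<le> 1 / z"
proof -
  have "z \<le> exp z" using exp_ge_add_one_self[of z] by linarith
  then show ?thesis using assms by (simp add: exp_minus field_simps)
qed

lemma tail_bound_pow_le:
  fixes l :: real
  assumes "l > 0" "real N \<ge> exp (4 * l\<^sup>2) / 4"
  shows "(1 - exp (- 2 * l\<^sup>2) / 3) ^ N \<le> 6 / l\<^sup>2"
proof -
  define q where "q = exp (- 2 * l\<^sup>2) / 3"
  have "0 < exp (- 2 * l\<^sup>2)" "exp (- 2 * l\<^sup>2) \<le> 1" using assms by simp_all
  then have "0 \<le> q" "q \<le> 1" unfolding q_def by linarith+
  have "q * (exp (4 * l\<^sup>2) / 4) = exp (2 * l\<^sup>2) / 12"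
    unfolding q_def by (simp add: mult_exp_exp)
  then have "exp (2 * l\<^sup>2) / 12 \<le> q * real N"
    using assms \<open>0 \<le> q\<close> by (metis mult_left_mono)
  then have "exp (- q * real N) \<le> exp (- (exp (2 * l\<^sup>2) / 12))" by simp
  then have "(1 - q) ^ N \<le> exp (- (exp (2 * l\<^sup>2) / 12))"
    using one_minus_pow_le_exp[OF \<open>0 \<le> q\<close> \<open>q \<le> 1\<close>, of N] by linarith
  also have "\<dots> \<le> 12 / exp (2 * l\<^sup>2)"
    using exp_neg_le_inverse[of "exp (2 * l\<^sup>2) / 12"] by simp
  also have "\<dots> \<le> 12 / (2 * l\<^sup>2)"
  proof -
    have "2 * l\<^sup>2 \<le> exp (2 * l\<^sup>2)" using exp_ge_add_one_self[of "2 * l\<^sup>2"] by linarith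
    then show ?thesis using assms by (intro divide_left_mono) auto
  qed
  finally show ?thesis unfolding q_def by simp
qed

lemma exp_four_sq_minus_exp_sq_ge:
  fixes l :: real
  shows "exp (4 * l\<^sup>2) - exp (l\<^sup>2) \<ge> 3 * l\<^sup>2"
    and "l > 1 \<Longrightarrow> exp (4 * l\<^sup>2) - exp (l\<^sup>2) \<ge> exp (4 * l\<^sup>2) / 2"
proof -
  have e: "exp (4 * l\<^sup>2) = exp (l\<^sup>2) * exp (3 * l\<^sup>2)" by (simp add: mult_exp_exp)
  have "1 * (3 * l\<^sup>2) \<le> exp (l\<^sup>2) * (exp (3 * l\<^sup>2) - 1)"
    using exp_ge_add_one_self[of "3 * l\<^sup>2"] by (intro mult_mono) (auto simp del: exp_ge_add_one_self)
  then show "exp (4 * l\<^sup>2) - exp (l\<^sup>2) \<ge> 3 * l\<^sup>2" using e by (simp add: algebra_simps)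
  assume "l > 1"
  then have "l\<^sup>2 > 1" by (simp add: less_1_mult power2_eq_square)
  then have "2 \<le> exp (3 * l\<^sup>2)" using exp_ge_add_one_self[of "3 * l\<^sup>2"] by linarith
  then show "exp (4 * l\<^sup>2) - exp (l\<^sup>2) \<ge> exp (4 * l\<^sup>2) / 2" using e by simp
qed

text \<open>\<open>[T\<^sub>1, T\<^sub>2]\<close> has length \<open>D/\<alpha>\<close>, so with \<open>N\<close> blocks of length \<open>h = D/(N\<alpha>)\<close> the argument of
  \<^const>\<open>small_ball_bound\<close> below is \<open>c/\<surd>h\<close> with \<open>c = \<delta>\<lambda>(2 + \<alpha>h)\<close>.\<close>

lemma exists_block_count:
  fixes \<alpha> \<delta> l :: real
  assumes "\<alpha> > 0" "\<delta> > 0" "4 * \<delta> * sqrt \<alpha> \<le> 1" "l > 0"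
  defines "D \<equiv> exp (4 * l\<^sup>2) - exp (l\<^sup>2)"
  shows "\<exists>N::nat. N \<ge> 1 \<and>
    small_ball_bound (\<delta> * l * (2 + D / N) / sqrt (D / (N * \<alpha>))) ^ N \<le> ou_decay_bound \<alpha> \<delta>"
proof -
  define x where "x u = \<delta> * l * (2 + u) * sqrt \<alpha> / sqrt u" for u
  have x_eq: "\<delta> * l * (2 + D / N) / sqrt (D / (N * \<alpha>)) = x (D / N)" for N :: nat
    unfolding x_def by (simp add: real_sqrt_divide real_sqrt_mult)
  have S: "(2 + exp 4) * \<delta> * sqrt \<alpha> \<ge> 0" "sqrt \<delta> \<ge> 0" "96 * \<delta> * \<alpha> \<ge> 0"
    using assms by auto
  have D3: "D \<ge> 3 * l\<^sup>2" unfolding D_def by (rule exp_four_sq_minus_exp_sq_ge)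
  have "l\<^sup>2 > 0" using assms by simp
  then have "D > 0" "l\<^sup>2 \<le> D" using D3 by linarith+
  show ?thesis
  proof (cases "l \<le> 1")
    case True
    \<comment> \<open>a single block; \<open>q \<le> x\<close> suffices\<close>
    have "l \<le> sqrt D" using \<open>l\<^sup>2 \<le> D\<close> assms by (intro real_le_rsqrt)
    then have "l / sqrt D \<le> 1" using \<open>D > 0\<close> by simp
    have "l\<^sup>2 \<le> 1" using True assms by (simp add: power_le_one)
    then have "exp (4 * l\<^sup>2) \<le> exp 4" by simp
    then have "D \<le> exp 4" unfolding D_def using exp_gt_zero[of "l\<^sup>2"] by linarith
    have "x D = \<delta> * (2 + D) * sqrt \<alpha> * (l / sqrt D)" unfolding x_def by simp
    also have "\<dots> \<le> \<delta> * (2 + D) * sqrt \<alpha> * 1"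
      using \<open>l / sqrt D \<le> 1\<close> \<open>D > 0\<close> assms by (intro mult_left_mono) auto
    also have "\<dots> \<le> (2 + exp 4) * \<delta> * sqrt \<alpha>"
      using \<open>D \<le> exp 4\<close> assms by (simp add: mult_right_mono mult_left_mono mult.assoc mult.left_commute)
    finally have "x D \<le> (2 + exp 4) * \<delta> * sqrt \<alpha>" .
    moreover have "small_ball_bound (x D) \<le> x D" unfolding small_ball_bound_def by simp
    ultimately have "small_ball_bound (x D) \<le> ou_decay_bound \<alpha> \<delta>"
      unfolding ou_decay_bound_def using S by linarith
    then show ?thesis using x_eq[of 1] by (intro exI[of _ 1]) simp
  next
    case False
    \<comment> \<open>\<open>N = \<lfloor>D\<rfloor>\<close> blocks, each of length between \<open>1/\<alpha>\<close> and \<open>2/\<alpha>\<close>\<close>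
    have D2: "D \<ge> exp (4 * l\<^sup>2) / 2" using False unfolding D_def
      by (intro exp_four_sq_minus_exp_sq_ge(2)) simp
    have "l\<^sup>2 > 1" using False by (simp add: less_1_mult power2_eq_square)
    then have "exp (4 * l\<^sup>2) \<ge> 4" using exp_ge_add_one_self[of "4 * l\<^sup>2"] by linarith
    then have "D \<ge> 2" using D2 by linarith
    define N where "N = nat \<lfloor>D\<rfloor>"
    have N: "real N \<le> D" "D < real N + 1" "real N \<ge> 1"
      unfolding N_def using \<open>D \<ge> 2\<close> by linarith+
    define u where "u = D / real N"
    have "u \<ge> 1" "u \<le> 2" unfolding u_def using N by (auto simp: field_simps)
    have "x u \<ge> 0" unfolding x_def using assms \<open>u \<ge> 1\<close> by simp
    have "x u \<le> 4 * \<delta> * l * sqrt \<alpha>"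
    proof -
      have "sqrt u \<ge> 1" using \<open>u \<ge> 1\<close> by simp
      then have "2 + u \<le> 4 * sqrt u" using \<open>u \<le> 2\<close> by linarith
      then have "(2 + u) / sqrt u \<le> 4" using \<open>sqrt u \<ge> 1\<close> by (simp add: divide_le_eq)
      then have "\<delta> * l * sqrt \<alpha> * ((2 + u) / sqrt u) \<le> \<delta> * l * sqrt \<alpha> * 4"
        using assms by (intro mult_left_mono) auto
      then show ?thesis unfolding x_def by (simp add: mult_ac)
    qed
    define p where "p = small_ball_bound (x u)"
    have "p \<ge> 0" using small_ball_bound_nonneg[OF \<open>x u \<ge> 0\<close>] unfolding p_def .
    have "p \<le> x u" "p \<le> 1"
      unfolding p_def using small_ball_bound_le_one by (auto simp: small_ball_bound_def)
    have "p ^ N \<le> ou_decay_bound \<alpha> \<delta>"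
    proof (cases "4 * \<delta> * l * sqrt \<alpha> \<le> sqrt \<delta>")
      case True
      have "p ^ N \<le> p ^ 1" using \<open>p \<ge> 0\<close> \<open>p \<le> 1\<close> N by (intro power_decreasing) auto
      then show ?thesis
        using \<open>p \<le> x u\<close> \<open>x u \<le> 4 * \<delta> * l * sqrt \<alpha>\<close> True S
        unfolding ou_decay_bound_def power_one_right by linarith
    next
      case large: False
      \<comment> \<open>then \<open>1/\<lambda>\<^sup>2 < 16\<delta>\<alpha>\<close>, and the Gaussian tail bound decays in \<open>N\<close>\<close>
      have "(sqrt \<delta>)\<^sup>2 < (4 * \<delta> * l * sqrt \<alpha>)\<^sup>2"
        using large assms by (intro power_strict_mono) auto
      then have "\<delta> < 16 * \<delta>\<^sup>2 * l\<^sup>2 * \<alpha>" using assms by (simp add: power_mult_distrib)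
      then have "1 < 16 * \<delta> * \<alpha> * l\<^sup>2" using assms by (simp add: power2_eq_square field_simps)
      then have "6 \<le> 96 * \<delta> * \<alpha> * l\<^sup>2" by linarith
      then have "6 / l\<^sup>2 \<le> 96 * \<delta> * \<alpha>" using \<open>l\<^sup>2 > 0\<close> by (simp add: divide_le_eq)
      have "4 * \<delta> * l * sqrt \<alpha> \<le> l"
        using mult_right_mono[OF assms(3), of l] assms by (simp add: mult_ac)
      then have "x u + 1 \<le> 2 * l" using \<open>x u \<le> 4 * \<delta> * l * sqrt \<alpha>\<close> False by linarith
      then have "(x u + 1)\<^sup>2 \<le> (2 * l)\<^sup>2" using \<open>x u \<ge> 0\<close> by (intro power_mono) auto
      then have "exp (- 2 * l\<^sup>2) \<le> exp (- (x u + 1)\<^sup>2 / 2)" by (simp add: power_mult_distrib)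
      moreover have "p \<le> 1 - exp (- (x u + 1)\<^sup>2 / 2) / 3" unfolding p_def small_ball_bound_def by simp
      ultimately have "p \<le> 1 - exp (- 2 * l\<^sup>2) / 3" by linarith
      then have "p ^ N \<le> (1 - exp (- 2 * l\<^sup>2) / 3) ^ N"
        using \<open>p \<ge> 0\<close> by (intro power_mono) auto
      also have "\<dots> \<le> 6 / l\<^sup>2"
        using assms N D2 by (intro tail_bound_pow_le) auto
      finally show ?thesis
        using \<open>6 / l\<^sup>2 \<le> 96 * \<delta> * \<alpha>\<close> S unfolding ou_decay_bound_def by linarith
    qed
    then show ?thesis using N x_eq[of N] unfolding p_def u_def by (intro exI[of _ N]) auto
  qed
qed

lemma ou_small_sup_prob_le:
  assumes "\<alpha> > 0" and fp: "filtered_prob_space M F"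
    and bm: "std_brownian_motion M F W" and ou: "ou_solution M F \<alpha> W X"
    and st: "is_stopping_time F \<tau>" and "T > 0" "h > 0" "b > 0" "N \<ge> 1"
  shows "measure M {\<omega>\<in>space M. ennreal (T + real N * h) \<le> \<tau> \<omega> \<and> run_max X \<tau> \<omega> < ereal b}
    \<le> measure M {\<omega>\<in>space M. ennreal T \<le> \<tau> \<omega>} * small_ball_bound (b * (2 + \<alpha> * h) / sqrt h) ^ N"
    (is "measure M ?L \<le> measure M ?R * ?q ^ N")
proof -
  have P: "prob_space M" and sp: "\<And>u. space (F u) = space M"
    and sub: "\<And>u. sets (F u) \<subseteq> sets M"
    using fp unfolding filtered_prob_space_def by auto
  interpret prob_space M by fact
  define c where "c = b * (2 + \<alpha> * h)"
  have "c > 0" unfolding c_def using assms by (intro mult_pos_pos add_pos_pos) auto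
  define A where "A = space M - {\<omega>\<in>space (F T). \<tau> \<omega> \<le> ennreal T}"
  have "{\<omega>\<in>space (F T). \<tau> \<omega> \<le> ennreal T} \<in> sets (F T)"
    using st \<open>T > 0\<close> unfolding is_stopping_time_def by simp
  then have "A \<in> sets (F T)" unfolding A_def by (metis sets.compl_sets sp)
  define E where "E = {\<omega>\<in>space M. \<omega> \<in> A \<and>
      (\<forall>k<N. \<bar>W (T + real (Suc k) * h) \<omega> - W (T + real k * h) \<omega>\<bar> < c)}"
  have "measure M {\<omega>\<in>space M. \<bar>W (s + h) \<omega> - W s \<omega>\<bar> < c} \<le> ?q" if "s \<ge> 0" for s
    using brownian_increment_prob_abs_less_le[OF P bm that \<open>h > 0\<close> \<open>c > 0\<close>] unfolding c_def .
  then have E: "E \<in> sets (F (T + real N * h)) \<and> measure M E \<le> measure M A * ?q ^ N"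
    unfolding E_def using \<open>T > 0\<close> \<open>h > 0\<close>
    by (intro brownian_small_increments_prob_le[OF fp bm _ _ \<open>A \<in> sets (F T)\<close>]) auto
  have "AE \<omega> in M. \<omega> \<in> ?L \<longrightarrow> \<omega> \<in> E"
    using ou unfolding ou_solution_def
  proof (elim conjE AE_mp, intro AE_I2 impI)
    fix \<omega> assume "\<omega> \<in> space M" and path: "X 0 \<omega> = 0 \<and> continuous_on {0..} (\<lambda>t. X t \<omega>) \<and>
        (\<forall>t\<ge>0. X t \<omega> = - \<alpha> * integral {0..t} (\<lambda>s. X s \<omega>) + W t \<omega>)" and "\<omega> \<in> ?L"
    have "ennreal T < ennreal (T + real N * h)" using assms by (simp add: ennreal_lessI)
    then have "\<omega> \<in> A" using \<open>\<omega> \<in> ?L\<close> unfolding A_def sp by auto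
    have "\<bar>X r \<omega>\<bar> < b" if "0 \<le> r" "r \<le> T + real N * h" for r
      using \<open>\<omega> \<in> ?L\<close> that
      by (intro abs_less_of_run_max_less[where \<tau> = \<tau>]) (auto intro: order_trans ennreal_leI)
    then have "\<bar>W (T + real (Suc k) * h) \<omega> - W (T + real k * h) \<omega>\<bar> < c" if "k < N" for k
      using path that assms unfolding c_def
      by (intro ou_path_block_increment_bound[where f = "\<lambda>t. X t \<omega>"]) auto
    then show "\<omega> \<in> E" unfolding E_def using \<open>\<omega> \<in> space M\<close> \<open>\<omega> \<in> A\<close> by simp
  qed
  then have "measure M ?L \<le> measure M E" using E sub by (intro finite_measure_mono_AE) auto
  also have "\<dots> \<le> measure M A * ?q ^ N" using E by simp
  also have "\<dots> \<le> measure M ?R * ?q ^ N"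
  proof (intro mult_right_mono finite_measure_mono)
    show "A \<subseteq> ?R" unfolding A_def sp by auto
    show "?R \<in> sets M" using stopping_time_borel_measurable[OF fp st] by measurable
    show "?q ^ N \<ge> 0" using \<open>c > 0\<close> \<open>h > 0\<close> small_ball_bound_nonneg unfolding c_def by simp
  qed
  finally show ?thesis .
qed

lemma ou_good_lambda_estimate:
  assumes "\<alpha> > 0" and fp: "filtered_prob_space M F"
    and bm: "std_brownian_motion M F W" and ou: "ou_solution M F \<alpha> W X"
    and st: "is_stopping_time F \<tau>" and "\<delta> > 0" "4 * \<delta> * sqrt \<alpha> \<le> 1" "l > 0"
  shows "measure M {\<omega>\<in>space M. sqrt_log_clock \<alpha> (\<tau> \<omega>) \<ge> ereal (2 * l)
                             \<and> run_max X \<tau> \<omega> < ereal (\<delta> * l)}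
       \<le> ou_decay_bound \<alpha> \<delta> * measure M {\<omega>\<in>space M. sqrt_log_clock \<alpha> (\<tau> \<omega>) \<ge> ereal l}"
proof -
  define D where "D = exp (4 * l\<^sup>2) - exp (l\<^sup>2)"
  obtain N :: nat where "N \<ge> 1" and qN:
      "small_ball_bound (\<delta> * l * (2 + D / N) / sqrt (D / (N * \<alpha>))) ^ N \<le> ou_decay_bound \<alpha> \<delta>"
    using exists_block_count[of \<alpha> \<delta> l] assms unfolding D_def by blast
  define T where "T = (exp (l\<^sup>2) - 1) / \<alpha>"
  define h where "h = D / (N * \<alpha>)"
  have "T > 0" unfolding T_def using assms by simp
  have "D > 0" unfolding D_def using assms by simp
  then have "h > 0" unfolding h_def using assms \<open>N \<ge> 1\<close> by simp
  have T_N: "T + real N * h = (exp ((2 * l)\<^sup>2) - 1) / \<alpha>"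
    unfolding h_def T_def D_def using \<open>N \<ge> 1\<close> assms by (simp add: field_simps power_mult_distrib)
  have "{\<omega>\<in>space M. sqrt_log_clock \<alpha> (\<tau> \<omega>) \<ge> ereal (2 * l) \<and> run_max X \<tau> \<omega> < ereal (\<delta> * l)}
    = {\<omega>\<in>space M. ennreal (T + real N * h) \<le> \<tau> \<omega> \<and> run_max X \<tau> \<omega> < ereal (\<delta> * l)}"
    unfolding T_N using sqrt_log_clock_ge_iff[OF \<open>\<alpha> > 0\<close>, of "2 * l"] \<open>l > 0\<close> by simp
  moreover have "\<delta> * l > 0" using assms by simp
  ultimately have "measure M {\<omega>\<in>space M. sqrt_log_clock \<alpha> (\<tau> \<omega>) \<ge> ereal (2 * l)
                             \<and> run_max X \<tau> \<omega> < ereal (\<delta> * l)}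
    \<le> measure M {\<omega>\<in>space M. ennreal T \<le> \<tau> \<omega>}
        * small_ball_bound (\<delta> * l * (2 + \<alpha> * h) / sqrt h) ^ N"
    using ou_small_sup_prob_le[OF assms(1-5) \<open>T > 0\<close> \<open>h > 0\<close> _ \<open>N \<ge> 1\<close>] by simp
  also have "\<dots> \<le> measure M {\<omega>\<in>space M. ennreal T \<le> \<tau> \<omega>} * ou_decay_bound \<alpha> \<delta>"
    using qN assms unfolding h_def by (intro mult_left_mono) auto
  also have "{\<omega>\<in>space M. ennreal T \<le> \<tau> \<omega>} = {\<omega>\<in>space M. sqrt_log_clock \<alpha> (\<tau> \<omega>) \<ge> ereal l}"
    unfolding T_def using sqrt_log_clock_ge_iff[OF \<open>\<alpha> > 0\<close> \<open>l > 0\<close>] by simp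
  finally show ?thesis by (simp add: mult.commute)
qed

theorem lemma3p4:
  fixes M :: "'a measure" and F :: "real \<Rightarrow> 'a measure"
    and W X :: "real \<Rightarrow> 'a \<Rightarrow> real" and \<alpha> :: real
  assumes "\<alpha> > 0"
    and "filtered_prob_space M F"
    and "std_brownian_motion M F W"
    and "ou_solution M F \<alpha> W X"
  shows "\<exists>\<phi> :: real \<Rightarrow> real. (\<forall>\<delta>>0. \<phi> \<delta> \<ge> 0) \<and> (\<phi> \<longlongrightarrow> 0) (at_right 0) \<and>
    (\<forall>\<tau> \<delta> l. is_stopping_time F \<tau> \<longrightarrow> \<delta> > 0 \<longrightarrow> l > 0 \<longrightarrow>
       measure M {\<omega>\<in>space M. sqrt_log_clock \<alpha> (\<tau> \<omega>) \<ge> ereal (2 * l)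
                             \<and> run_max X \<tau> \<omega> < ereal (\<delta> * l)}
       \<le> \<phi> \<delta> * measure M {\<omega>\<in>space M. sqrt_log_clock \<alpha> (\<tau> \<omega>) \<ge> ereal l})"
proof -
  define \<phi> where "\<phi> \<delta> = (if 4 * \<delta> * sqrt \<alpha> \<le> 1 then ou_decay_bound \<alpha> \<delta> else 1)" for \<delta>
  have "\<phi> \<delta> \<ge> 0" if "\<delta> > 0" for \<delta>
    using that assms(1) ou_decay_bound_nonneg[of \<alpha> \<delta>] unfolding \<phi>_def by simp
  moreover have "(\<phi> \<longlongrightarrow> 0) (at_right 0)"
  proof (rule Lim_transform_eventually[OF ou_decay_bound_tendsto_zero])
    show "\<forall>\<^sub>F \<delta> in at_right 0. ou_decay_bound \<alpha> \<delta> = \<phi> \<delta>"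
      using assms(1) unfolding eventually_at_right_field \<phi>_def
      by (intro exI[of _ "1 / (4 * sqrt \<alpha>)"]) (auto simp: field_simps)
  qed
  moreover have "measure M {\<omega>\<in>space M. sqrt_log_clock \<alpha> (\<tau> \<omega>) \<ge> ereal (2 * l)
                             \<and> run_max X \<tau> \<omega> < ereal (\<delta> * l)}
       \<le> \<phi> \<delta> * measure M {\<omega>\<in>space M. sqrt_log_clock \<alpha> (\<tau> \<omega>) \<ge> ereal l}"
    if "is_stopping_time F \<tau>" "\<delta> > 0" "l > 0" for \<tau> \<delta> l
    using ou_good_lambda_estimate[OF assms that(1,2) _ that(3)]
      sqrt_log_clock_prob_mono[OF assms(1,2) that(1,3), of "2 * l"] that
    unfolding \<phi>_def by auto
  ultimately show ?thesis by blast
qed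

end
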